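(* For every $N\ge1$ and $m\ge1$, $w^{St}_{\mathfrak{so}(N)}((1,2,\dots,m))=\frac{(N-1)^m+1-N}{N}$ if $m$ is odd, and $=\frac{(N-1)^m-1+N^2}{N}$ if $m$ is even.
   Context: For $1\le i\le N$, $\bar i=N+1-i$, $F_{ij}=E_{ij}-E_{\bar j\bar i}$ ($E_{ij}$ matrix units), spanning $\mathfrak{so}(N)$; for $\alpha\in\mathbb{S}_m$, $w_{\mathfrak{so}(N)}(\alpha)=\sum_{i_1,\dots,i_m=1}^N F_{i_1i_{\alpha(1)}}\cdots F_{i_mi_{\alpha(m)}}\in U(\mathfrak{so}(N))$, and $w^{St}_{\mathfrak{so}(N)}(\alpha)=\frac1N\operatorname{Tr}\rho(w_{\mathfrak{so}(N)}(\alpha))$ with $\rho$ the standard $N$-dimensional matrix representation extended to $U(\mathfrak{so}(N))$. *)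

theory Defs
  imports Complex_Main "HOL-Library.FuncSet"
begin

text \<open>N x N real matrices are represented as functions nat \<Rightarrow> nat \<Rightarrow> real,
  with row/column indices ranging over {1..N}.\<close>

definition mat_mult :: "nat \<Rightarrow> (nat \<Rightarrow> nat \<Rightarrow> real) \<Rightarrow> (nat \<Rightarrow> nat \<Rightarrow> real) \<Rightarrow> (nat \<Rightarrow> nat \<Rightarrow> real)" where
  "mat_mult N A B = (\<lambda>a b. \<Sum>c = 1..N. A a c * B c b)"

definition mat_id :: "nat \<Rightarrow> nat \<Rightarrow> real" where
  "mat_id = (\<lambda>a b. if a = b then 1 else 0)"

definition mat_trace :: "nat \<Rightarrow> (nat \<Rightarrow> nat \<Rightarrow> real) \<Rightarrow> real" where
  "mat_trace N A = (\<Sum>a = 1..N. A a a)"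

definition E_unit :: "nat \<Rightarrow> nat \<Rightarrow> nat \<Rightarrow> nat \<Rightarrow> real" where
  "E_unit i j = (\<lambda>a b. if a = i \<and> b = j then 1 else 0)"

definition bar :: "nat \<Rightarrow> nat \<Rightarrow> nat" where
  "bar N i = N + 1 - i"

text \<open>F_ij = E_ij - E_{bar j, bar i}, i.e. the image of F_ij in the standard representation.\<close>
definition F_so :: "nat \<Rightarrow> nat \<Rightarrow> nat \<Rightarrow> nat \<Rightarrow> nat \<Rightarrow> real" where
  "F_so N i j = (\<lambda>a b. E_unit i j a b - E_unit (bar N j) (bar N i) a b)"

definition mat_prod_list :: "nat \<Rightarrow> (nat \<Rightarrow> nat \<Rightarrow> real) list \<Rightarrow> (nat \<Rightarrow> nat \<Rightarrow> real)" where
  "mat_prod_list N As = foldr (mat_mult N) As mat_id"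

definition rho_w_so :: "nat \<Rightarrow> nat \<Rightarrow> (nat \<Rightarrow> nat) \<Rightarrow> (nat \<Rightarrow> nat \<Rightarrow> real)" where
  "rho_w_so N m \<alpha> = (\<lambda>a b. \<Sum>\<iota> \<in> PiE {1..m} (\<lambda>_. {1..N}).
      mat_prod_list N (map (\<lambda>k. F_so N (\<iota> k) (\<iota> (\<alpha> k))) [1..<m+1]) a b)"

definition w_St_so :: "nat \<Rightarrow> nat \<Rightarrow> (nat \<Rightarrow> nat) \<Rightarrow> real" where
  "w_St_so N m \<alpha> = mat_trace N (rho_w_so N m \<alpha>) / real N"

definition long_cycle :: "nat \<Rightarrow> nat \<Rightarrow> nat" where
  "long_cycle m k = (if k < m then k + 1 else 1)"

end

theory Submission
  imports Defs
begin

(* Expanding the cyclic product, rho(w((1 2 ... m))) is the sum over i of the path sums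
   Phi_m(i,i), where Phi_k(i,j) is the sum of F_{i i_1} F_{i_1 i_2} ... F_{i_(k-1) j} over all
   intermediate indices; equivalently Phi_0(i,j) = delta_ij I and
   Phi_(k+1)(i,j) = sum_y F_{i y} Phi_k(y,j).  Since F_{i y} = E_{i y} - E_{bar y, bar i}, this
   recursion preserves the span of E_{i j}, E_{bar j, bar i} and delta_ij I, and one finds
     Phi_k(i,j) = c_k E_{i j} + (-1)^k (delta_ij I if k is even, E_{bar j, bar i} if k is odd)
   with c_(k+1) = (N - 1) c_k + (-1)^k, i.e. c_k = ((N - 1)^k - (-1)^k) / N.  Summing the traces
   over i gives N c_m + N^2 for even m and N c_m - N for odd m. *)

lemma sum_lists_length_Suc:
  "(\<Sum>xs\<in>{xs. set xs \<subseteq> A \<and> length xs = Suc n}. f xs)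
    = (\<Sum>x\<in>A. \<Sum>ys\<in>{ys. set ys \<subseteq> A \<and> length ys = n}. f (x # ys))"
proof -
  have "(\<Sum>xs\<in>{xs. set xs \<subseteq> A \<and> length xs = Suc n}. f xs)
      = (\<Sum>(ys, x)\<in>{ys. set ys \<subseteq> A \<and> length ys = n} \<times> A. f (x # ys))"
    unfolding lists_length_Suc_eq sum.reindex[OF inj_split_Cons] by (simp add: case_prod_unfold)
  then show ?thesis
    by (simp add: sum.cartesian_product[symmetric] sum.swap[of _ A])
qed

lemma bij_betw_map_upt_PiE:
  "bij_betw (\<lambda>f. map f [1..<m+1]) (PiE {1..m} (\<lambda>_. A)) {xs. set xs \<subseteq> A \<and> length xs = m}"
proof (rule bij_betw_imageI)
  show "inj_on (\<lambda>f. map f [1..<m+1]) (PiE {1..m} (\<lambda>_. A))"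
  proof (rule inj_onI)
    fix f g assume "f \<in> PiE {1..m} (\<lambda>_. A)" "g \<in> PiE {1..m} (\<lambda>_. A)"
      and "map f [1..<m+1] = map g [1..<m+1]"
    then show "f = g"
      by (intro PiE_ext[of f "{1..m}" "\<lambda>_. A" g]) (auto simp: map_eq_conv simp del: upt_Suc)
  qed
next
  show "(\<lambda>f. map f [1..<m+1]) ` PiE {1..m} (\<lambda>_. A) = {xs. set xs \<subseteq> A \<and> length xs = m}"
  proof (intro equalityI subsetI)
    fix xs assume "xs \<in> {xs. set xs \<subseteq> A \<and> length xs = m}"
    then have xs: "set xs \<subseteq> A" "length xs = m" by auto
    define f where "f = restrict (\<lambda>k. xs ! (k - 1)) {1..m}"
    have "map f [1..<m+1] = xs"
      using xs(2) by (intro nth_equalityI) (auto simp: f_def simp del: upt_Suc)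
    moreover have "f \<in> PiE {1..m} (\<lambda>_. A)"
      using xs by (auto simp: f_def nth_mem subsetD)
    ultimately show "xs \<in> (\<lambda>f. map f [1..<m+1]) ` PiE {1..m} (\<lambda>_. A)"
      by (rule image_eqI[OF sym])
  qed (auto simp: PiE_def Pi_def)
qed

lemma bar_bar: "a \<in> {1..N} \<Longrightarrow> bar N (bar N a) = a"
  by (auto simp: bar_def)

lemma bar_in_range: "a \<in> {1..N} \<Longrightarrow> bar N a \<in> {1..N}"
  by (auto simp: bar_def)

lemma eq_bar_iff: "a \<in> {1..N} \<Longrightarrow> b \<in> {1..N} \<Longrightarrow> a = bar N b \<longleftrightarrow> b = bar N a"
  by (auto simp: bar_def)

lemma F_so_apply:
  "F_so N i j a b = of_bool (a = i \<and> b = j) - of_bool (a = bar N j \<and> b = bar N i)"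
  unfolding F_so_def E_unit_def of_bool_def ..

lemma mat_prod_list_Cons: "mat_prod_list N (A # As) = mat_mult N A (mat_prod_list N As)"
  by (simp add: mat_prod_list_def)

lemma sum_mat_mult_right:
  "(\<Sum>s\<in>S. mat_mult N A (B s) a b) = mat_mult N A (\<lambda>c d. \<Sum>s\<in>S. B s c d) a b"
  by (simp add: mat_mult_def sum_distrib_left sum.swap[of _ S])

lemma sum_mat_mult_F_so:
  assumes "a \<in> {1..N}" "i \<in> {1..N}"
  shows "(\<Sum>y = 1..N. mat_mult N (F_so N i y) (M y) a b)
    = of_bool (a = i) * (\<Sum>y = 1..N. M y y b) - M (bar N a) (bar N i) b"
proof -
  have "(\<Sum>y = 1..N. mat_mult N (F_so N i y) (M y) a b)
      = (\<Sum>y = 1..N. of_bool (a = i) * M y y b - of_bool (y = bar N a) * M y (bar N i) b)"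
  proof (rule sum.cong)
    fix y assume "y \<in> {1..N}"
    then show "mat_mult N (F_so N i y) (M y) a b
        = of_bool (a = i) * M y y b - of_bool (y = bar N a) * M y (bar N i) b"
      using assms bar_in_range[OF assms(2)]
      by (simp add: mat_mult_def F_so_apply left_diff_distrib sum_subtractf of_bool_conj
          mult.assoc eq_bar_iff)
  qed simp
  also have "\<dots> = of_bool (a = i) * (\<Sum>y = 1..N. M y y b) - M (bar N a) (bar N i) b"
    using bar_in_range[OF assms(1)] by (simp add: sum_subtractf sum_distrib_left)
  finally show ?thesis .
qed

fun path_sum :: "nat \<Rightarrow> nat \<Rightarrow> nat \<Rightarrow> nat \<Rightarrow> (nat \<Rightarrow> nat \<Rightarrow> real)" where
  "path_sum N 0 i j = (\<lambda>a b. of_bool (i = j) * mat_id a b)"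
| "path_sum N (Suc k) i j = (\<lambda>a b. \<Sum>y = 1..N. mat_mult N (F_so N i y) (path_sum N k y j) a b)"

lemma path_sum_eq_sum_lists:
  assumes "j \<in> {1..N}"
  shows "path_sum N (Suc n) x j = (\<lambda>a b. \<Sum>ys\<in>{ys. set ys \<subseteq> {1..N} \<and> length ys = n}.
            mat_prod_list N (map2 (F_so N) (x # ys) (ys @ [j])) a b)"
proof (induction n arbitrary: x)
  case 0
  have "mat_mult N (F_so N x y) (path_sum N 0 y j) a b
      = of_bool (y = j) * mat_mult N (F_so N x y) mat_id a b" for y a b
    by (cases "y = j") (simp_all add: mat_mult_def)
  moreover have "{ys. set ys \<subseteq> {1..N} \<and> length ys = 0} = {[]}"
    by auto
  ultimately show ?case
    using assms by (simp add: mat_prod_list_def)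
next
  case (Suc n)
  show ?case
    unfolding sum_lists_length_Suc path_sum.simps(2)[of N "Suc n"] Suc.IH
    by (simp add: mat_prod_list_Cons sum_mat_mult_right)
qed

lemma map_long_cycle_upt:
  assumes "m \<ge> 1"
  shows "map (long_cycle m) [1..<m+1] = rotate1 [1..<m+1]"
proof -
  have "map (long_cycle m) [1..<m] = map Suc [1..<m]"
    by (intro map_cong) (auto simp: long_cycle_def)
  then have "map (long_cycle m) [1..<m+1] = map Suc [1..<m] @ [1]"
    using assms by (simp add: long_cycle_def)
  moreover have "rotate1 [1..<m+1] = map Suc [1..<m] @ [1]"
    using assms by (simp add: upt_conv_Cons map_Suc_upt del: upt_Suc)
  ultimately show ?thesis by simp
qed

lemma rho_w_so_long_cycle:
  assumes "m \<ge> 1"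
  shows "rho_w_so N m (long_cycle m) a b = (\<Sum>x = 1..N. path_sum N m x x a b)"
proof -
  obtain n where m: "m = Suc n"
    using assms by (cases m) auto
  have cycle: "map (\<lambda>k. F_so N (f k) (f (long_cycle m k))) [1..<m+1]
      = map2 (F_so N) (map f [1..<m+1]) (rotate1 (map f [1..<m+1]))" for f
    unfolding rotate1_map map_long_cycle_upt[OF assms, symmetric]
    by (simp add: zip_map_map zip_same_conv_map del: upt_Suc)
  have "rho_w_so N m (long_cycle m) a b = (\<Sum>f\<in>PiE {1..m} (\<lambda>_. {1..N}).
      mat_prod_list N (map2 (F_so N) (map f [1..<m+1]) (rotate1 (map f [1..<m+1]))) a b)"
    unfolding rho_w_so_def cycle ..
  also have "\<dots> = (\<Sum>xs\<in>{xs. set xs \<subseteq> {1..N} \<and> length xs = m}.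
      mat_prod_list N (map2 (F_so N) xs (rotate1 xs)) a b)"
    by (rule sum.reindex_bij_betw[OF bij_betw_map_upt_PiE])
  also have "\<dots> = (\<Sum>x = 1..N. \<Sum>ys\<in>{ys. set ys \<subseteq> {1..N} \<and> length ys = n}.
      mat_prod_list N (map2 (F_so N) (x # ys) (ys @ [x])) a b)"
    unfolding m sum_lists_length_Suc by simp
  also have "\<dots> = (\<Sum>x = 1..N. path_sum N m x x a b)"
    unfolding m by (intro sum.cong refl) (simp add: path_sum_eq_sum_lists del: path_sum.simps)
  finally show ?thesis .
qed

definition path_coef :: "nat \<Rightarrow> nat \<Rightarrow> real" where
  "path_coef N k = ((real N - 1) ^ k - (-1) ^ k) / real N"

definition path_sum_formula :: "nat \<Rightarrow> nat \<Rightarrow> nat \<Rightarrow> nat \<Rightarrow> (nat \<Rightarrow> nat \<Rightarrow> real)" where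
  "path_sum_formula N k i j = (\<lambda>a b. path_coef N k * of_bool (a = i \<and> b = j) + (-1) ^ k *
     (if even k then of_bool (i = j \<and> a = b) else of_bool (a = bar N j \<and> b = bar N i)))"

lemma path_coef_Suc: "N \<ge> 1 \<Longrightarrow> path_coef N (Suc k) = (real N - 1) * path_coef N k + (-1) ^ k"
  by (simp add: path_coef_def field_simps)

lemma sum_diag_path_sum_formula:
  assumes "j \<in> {1..N}" "b \<in> {1..N}"
  shows "(\<Sum>y = 1..N. path_sum_formula N k y j y b)
    = (real N * path_coef N k + (-1) ^ k) * of_bool (j = b)"
proof -
  have even_part: "(\<Sum>y = 1..N. of_bool (y = j \<and> y = b) :: real) = of_bool (j = b)"
    using assms by (simp add: of_bool_conj)
  have "(\<Sum>y = 1..N. of_bool (y = bar N j \<and> b = bar N y) :: real)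
      = (\<Sum>y = 1..N. if y = bar N j then of_bool (j = b) else 0)"
    by (rule sum.cong) (use assms bar_bar in auto)
  also have "\<dots> = of_bool (j = b)"
    using bar_in_range[OF assms(1)] by simp
  finally have odd_part:
    "(\<Sum>y = 1..N. of_bool (y = bar N j \<and> b = bar N y) :: real) = of_bool (j = b)" .
  have "(\<Sum>y = 1..N. path_sum_formula N k y j y b)
      = path_coef N k * (\<Sum>y = 1..N. of_bool (j = b))
      + (-1) ^ k * (if even k then (\<Sum>y = 1..N. of_bool (y = j \<and> y = b))
                    else (\<Sum>y = 1..N. of_bool (y = bar N j \<and> b = bar N y)))"
    unfolding path_sum_formula_def sum.distrib sum_distrib_left
    by (cases "even k") (simp_all add: sum_negf)
  also have "\<dots> = (real N * path_coef N k + (-1) ^ k) * of_bool (j = b)"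
    unfolding even_part odd_part by (simp add: algebra_simps)
  finally show ?thesis .
qed

lemma path_sum_eq_formula:
  assumes "i \<in> {1..N}" "j \<in> {1..N}" "a \<in> {1..N}" "b \<in> {1..N}"
  shows "path_sum N k i j a b = path_sum_formula N k i j a b"
  using assms(1,3)
proof (induction k arbitrary: i a)
  case 0
  then show ?case by (simp add: path_sum_formula_def path_coef_def mat_id_def)
next
  case (Suc k)
  have "path_sum N (Suc k) i j a b
      = of_bool (a = i) * (\<Sum>y = 1..N. path_sum N k y j y b)
        - path_sum N k (bar N a) j (bar N i) b"
    using sum_mat_mult_F_so[OF Suc.prems(2,1)] by simp
  also have "\<dots> = of_bool (a = i) * (real N * path_coef N k + (-1) ^ k) * of_bool (j = b)
      - path_sum_formula N k (bar N a) j (bar N i) b"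
  proof -
    have "(\<Sum>y = 1..N. path_sum N k y j y b) = (\<Sum>y = 1..N. path_sum_formula N k y j y b)"
      by (intro sum.cong refl Suc.IH) auto
    also have "\<dots> = (real N * path_coef N k + (-1) ^ k) * of_bool (j = b)"
      by (rule sum_diag_path_sum_formula[OF assms(2,4)])
    finally show ?thesis
      using Suc.IH[of "bar N a" "bar N i"] Suc.prems bar_in_range by simp
  qed
  also have "\<dots> = path_sum_formula N (Suc k) i j a b"
  proof -
    have "bar N i = bar N a \<longleftrightarrow> a = i" "bar N i = bar N j \<longleftrightarrow> i = j"
      "bar N a = j \<longleftrightarrow> a = bar N j" "bar N i = b \<longleftrightarrow> b = bar N i"
      "b = bar N (bar N a) \<longleftrightarrow> a = b"
      using Suc.prems assms(2,4) by (auto simp: bar_def)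
    then have "path_sum_formula N k (bar N a) j (bar N i) b
        = path_coef N k * of_bool (a = i \<and> b = j) + (-1) ^ k *
          (if even k then of_bool (a = bar N j \<and> b = bar N i) else of_bool (i = j \<and> a = b))"
      by (simp add: path_sum_formula_def)
    then show ?thesis
      using Suc.prems path_coef_Suc[of N k] by (auto simp: path_sum_formula_def algebra_simps)
  qed
  finally show ?case .
qed

lemma sum_trace_path_sum:
  "(\<Sum>x = 1..N. mat_trace N (path_sum N k x x))
    = real N * path_coef N k + (-1) ^ k * (if even k then real N ^ 2 else real N)"
proof -
  have "(\<Sum>x = 1..N. mat_trace N (path_sum N k x x))
      = (\<Sum>x = 1..N. \<Sum>a = 1..N. path_sum_formula N k x x a a)"
    unfolding mat_trace_def by (intro sum.cong refl path_sum_eq_formula) auto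
  also have "\<dots> = (\<Sum>x = 1..N. path_coef N k + (-1) ^ k * (if even k then real N else 1))"
  proof (intro sum.cong refl)
    fix x assume "x \<in> {1..N}"
    then show "(\<Sum>a = 1..N. path_sum_formula N k x x a a)
        = path_coef N k + (-1) ^ k * (if even k then real N else 1)"
      using bar_in_range[of x N]
      by (cases "even k") (simp_all add: path_sum_formula_def sum.distrib sum_subtractf)
  qed
  also have "\<dots> = real N * path_coef N k + (-1) ^ k * (if even k then real N ^ 2 else real N)"
    by (simp add: power2_eq_square algebra_simps)
  finally show ?thesis .
qed

theorem corollary13:
  fixes N m :: nat
  assumes "N \<ge> 1" and "m \<ge> 1"
  shows "w_St_so N m (long_cycle m) =
    (if odd m then ((real N - 1) ^ m + 1 - real N) / real N
     else ((real N - 1) ^ m - 1 + (real N)^2) / real N)"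
proof -
  have w: "w_St_so N m (long_cycle m) = (\<Sum>x = 1..N. mat_trace N (path_sum N m x x)) / real N"
    unfolding w_St_so_def mat_trace_def rho_w_so_long_cycle[OF assms(2)]
    by (subst sum.swap) (rule refl)
  show ?thesis
    unfolding w sum_trace_path_sum
    using assms(1) by (cases "even m") (simp_all add: path_coef_def field_simps)
qed

end
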